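(* For every integer $k\ge 1$, the complete graph $K_{2k+1}$ has a quasi-majority neighbor sum distinguishing $3$-edge-coloring in which exactly $k$ vertices are each incident to $k-1$ edges of color $2$ and the remaining $k+1$ vertices are each incident to $k$ edges of color $2$.
   Context: A $3$-edge-coloring of $G$ is any map $c:E(G)\to\{1,2,3\}$ (adjacent edges may share colors). It induces $\sigma_c(v)=\sum_{u\in N(v)}c(vu)$. The coloring is neighbor sum distinguishing if $\sigma_c(u)\ne\sigma_c(v)$ for every edge $uv$, and quasi-majority if every vertex $v$ is incident to at most $\lceil d(v)/2\rceil$ edges of each single color. *)

theory Defs
  imports Main
begin

definition complete_edges :: "'a set \<Rightarrow> 'a set set" where
  "complete_edges V = {{u, v} | u v. u \<in> V \<and> v \<in> V \<and> u \<noteq> v}"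

definition nbrs :: "'a set set \<Rightarrow> 'a \<Rightarrow> 'a set" where
  "nbrs E v = {u. {v, u} \<in> E}"

definition degree :: "'a set set \<Rightarrow> 'a \<Rightarrow> nat" where
  "degree E v = card (nbrs E v)"

definition is_3_edge_coloring :: "'a set set \<Rightarrow> ('a set \<Rightarrow> nat) \<Rightarrow> bool" where
  "is_3_edge_coloring E c \<longleftrightarrow> (\<forall>e\<in>E. c e \<in> {1, 2, 3})"

definition sigma :: "'a set set \<Rightarrow> ('a set \<Rightarrow> nat) \<Rightarrow> 'a \<Rightarrow> nat" where
  "sigma E c v = (\<Sum>u\<in>nbrs E v. c {v, u})"

definition color_deg :: "'a set set \<Rightarrow> ('a set \<Rightarrow> nat) \<Rightarrow> nat \<Rightarrow> 'a \<Rightarrow> nat" where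
  "color_deg E c i v = card {u \<in> nbrs E v. c {v, u} = i}"

definition nsd :: "'a set set \<Rightarrow> ('a set \<Rightarrow> nat) \<Rightarrow> bool" where
  "nsd E c \<longleftrightarrow> (\<forall>u v. {u, v} \<in> E \<longrightarrow> sigma E c u \<noteq> sigma E c v)"

definition quasi_majority :: "'a set \<Rightarrow> 'a set set \<Rightarrow> ('a set \<Rightarrow> nat) \<Rightarrow> bool" where
  "quasi_majority V E c \<longleftrightarrow>
     (\<forall>v\<in>V. \<forall>i\<in>{1,2,3::nat}. 2 * color_deg E c i v \<le> degree E v + 1)"

end

theory Submission
  imports Defs
begin

text \<open>Label the vertices of \<open>K_{2k+1}\<close> by \<open>0, \<dots>, 2k\<close> and give the edge \<open>uv\<close> the colour \<open>f(u + v)\<close>,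
  where \<open>f(s) = 2\<close> for even \<open>s\<close>, \<open>f(s) = 1\<close> for odd \<open>s < 2k\<close> and \<open>f(s) = 3\<close> for odd \<open>s > 2k\<close>.
  The values \<open>f(u + v)\<close> over the window \<open>u = 0, \<dots>, 2k\<close> sum to \<open>3k + 2 + v\<close>, since moving the
  window up by one trades \<open>f(v)\<close> for \<open>f(v + 2k + 1) = f(v) + 1\<close>; removing the loop term
  \<open>f(2v) = 2\<close> gives \<open>\<sigma>(v) = 3k + v\<close>, which is injective. Colour 2 joins \<open>v\<close> exactly to the other
  vertices of its parity (\<open>k - 1\<close> of them for odd \<open>v\<close>, \<open>k\<close> for even \<open>v\<close>), and colours 1 and 3 only
  occur towards the opposite parity class, of which \<open>0\<close> and \<open>2k\<close> receive different colours from
  an odd \<open>v\<close>; so no colour appears more than \<open>k\<close> times at a vertex.\<close>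

lemma mem_complete_edges:
  "{u, v} \<in> complete_edges V \<longleftrightarrow> u \<in> V \<and> v \<in> V \<and> u \<noteq> v"
  unfolding complete_edges_def by (auto simp: doubleton_eq_iff)

lemma nbrs_complete_edges:
  "v \<in> V \<Longrightarrow> nbrs (complete_edges V) v = V - {v}"
  unfolding nbrs_def by (auto simp: mem_complete_edges)

lemma degree_complete_edges:
  "v \<in> V \<Longrightarrow> degree (complete_edges V) v = card V - 1"
  unfolding degree_def by (simp add: nbrs_complete_edges card_Diff_singleton_if)

lemma sigma_sum_colouring:
  fixes f :: "'a::comm_monoid_add \<Rightarrow> nat"
  assumes "v \<in> V"
  shows "sigma (complete_edges V) (\<lambda>e. f (\<Sum>e)) v = (\<Sum>u\<in>V - {v}. f (v + u))"
  unfolding sigma_def nbrs_complete_edges[OF assms] by (rule sum.cong) auto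

lemma color_deg_sum_colouring:
  fixes f :: "'a::comm_monoid_add \<Rightarrow> nat"
  assumes "v \<in> V"
  shows "color_deg (complete_edges V) (\<lambda>e. f (\<Sum>e)) i v = card {u \<in> V - {v}. f (v + u) = i}"
  unfolding color_deg_def nbrs_complete_edges[OF assms] by (rule arg_cong[where f = card]) auto

lemma card_even_below_odd: "card {u \<in> {0..<2*m+1}. even u} = m + 1"
proof -
  have "{u \<in> {0..<2*m+1}. even u} = (\<lambda>i. 2*i) ` {..m}"
    by (auto elim!: evenE)
  then show ?thesis by (simp add: card_image inj_on_def)
qed

lemma card_odd_below_odd: "card {u \<in> {0..<2*m+1}. odd u} = m"
proof -
  have "{u \<in> {0..<2*m+1}. odd u} = (\<lambda>i. 2*i+1) ` {..<m}"
    by (auto elim!: oddE)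
  then show ?thesis by (simp add: card_image inj_on_def)
qed

definition parity_colour :: "nat \<Rightarrow> nat \<Rightarrow> nat" where
  "parity_colour k s = (if even s then 2 else if s < 2*k then 1 else 3)"

lemma parity_colour_range: "parity_colour k s \<in> {1, 2, 3}"
  by (simp add: parity_colour_def)

lemma parity_colour_eq_2_iff: "parity_colour k s = 2 \<longleftrightarrow> even s"
  by (simp add: parity_colour_def)

lemma parity_colour_shift:
  "v < 2*k \<Longrightarrow> parity_colour k (2*k + 1 + v) = parity_colour k v + 1"
  by (auto simp: parity_colour_def)

lemma parity_colour_initial_sum:
  "m \<le> k \<Longrightarrow> (\<Sum>u<2*m+1. parity_colour k u) = 3*m + 2"
proof (induction m)
  case 0
  then show ?case by (simp add: parity_colour_def)
next
  case (Suc m)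
  have "(\<Sum>u<2 * Suc m + 1. parity_colour k u)
      = (\<Sum>u<2*m+1. parity_colour k u) + parity_colour k (2*m+1) + parity_colour k (2*m+2)"
    by (simp add: numeral_2_eq_2)
  also have "\<dots> = (3*m + 2) + 1 + 2"
    using Suc by (simp add: parity_colour_def)
  finally show ?case by simp
qed

lemma parity_colour_window_sum:
  "v \<le> 2*k \<Longrightarrow> (\<Sum>u<2*k+1. parity_colour k (u + v)) = 3*k + 2 + v"
proof (induction v)
  case 0
  then show ?case using parity_colour_initial_sum[of k k] by simp
next
  case (Suc v)
  have "(\<Sum>u<2*k+1. parity_colour k (u + Suc v)) + parity_colour k v
      = (\<Sum>u<Suc (2*k+1). parity_colour k (u + v))"
    by (subst sum.lessThan_Suc_shift) simp
  also have "\<dots> = (\<Sum>u<2*k+1. parity_colour k (u + v)) + parity_colour k (2*k + 1 + v)"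
    by (simp add: add.commute)
  also have "\<dots> = (3*k + 2 + v) + (parity_colour k v + 1)"
    using Suc parity_colour_shift[of v k] by simp
  finally show ?case by simp
qed

abbreviation parity_colouring :: "nat \<Rightarrow> nat set \<Rightarrow> nat" where
  "parity_colouring k \<equiv> \<lambda>e. parity_colour k (\<Sum>e)"

lemma sigma_parity_colouring:
  assumes "v < 2*k + 1"
  shows "sigma (complete_edges {0..<2*k+1}) (parity_colouring k) v = 3*k + v"
proof -
  have "(\<Sum>u\<in>{0..<2*k+1}. parity_colour k (v + u))
      = parity_colour k (v + v) + (\<Sum>u\<in>{0..<2*k+1} - {v}. parity_colour k (v + u))"
    using assms by (subst sum.remove[of _ v]) auto
  moreover have "(\<Sum>u\<in>{0..<2*k+1}. parity_colour k (v + u)) = 3*k + 2 + v"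
    using parity_colour_window_sum[of v k] assms by (simp add: lessThan_atLeast0 add.commute)
  moreover have "parity_colour k (v + v) = 2"
    by (simp add: parity_colour_eq_2_iff)
  ultimately show ?thesis
    using assms by (simp add: sigma_sum_colouring)
qed

lemma color_deg_2_parity_colouring:
  assumes "v < 2*k + 1"
  shows "color_deg (complete_edges {0..<2*k+1}) (parity_colouring k) 2 v
    = (if odd v then k - 1 else k)"
proof -
  have "{u \<in> {0..<2*k+1} - {v}. parity_colour k (v + u) = 2}
      = {u \<in> {0..<2*k+1}. even u \<longleftrightarrow> even v} - {v}"
    by (auto simp: parity_colour_eq_2_iff)
  then show ?thesis
    using assms card_even_below_odd[of k] card_odd_below_odd[of k]
    by (simp add: color_deg_sum_colouring card_Diff_singleton)
qed

lemma card_parity_colour_class_le: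
  assumes "v < 2*k + 1" and "i \<noteq> 2"
  shows "card {u \<in> {0..<2*k+1} - {v}. parity_colour k (v + u) = i} \<le> k"
proof (cases "even v")
  case True
  then have "{u \<in> {0..<2*k+1} - {v}. parity_colour k (v + u) = i} \<subseteq> {u \<in> {0..<2*k+1}. odd u}"
    using assms(2) by (auto simp: parity_colour_def)
  then show ?thesis
    using card_mono[of "{u \<in> {0..<2*k+1}. odd u}"] card_odd_below_odd[of k] by fastforce
next
  case False
  \<comment> \<open>the even neighbours \<open>0\<close> and \<open>2k\<close> of \<open>v\<close> get colours 1 and 3 respectively\<close>
  define w where "w = (if i = 1 then 2*k else 0)"
  have "v < 2*k" using False assms(1) by presburger
  then have w_colour: "parity_colour k (v + w) \<noteq> i"
    using False by (simp add: parity_colour_def w_def)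
  have "{u \<in> {0..<2*k+1} - {v}. parity_colour k (v + u) = i}
      \<subseteq> {u \<in> {0..<2*k+1}. even u} - {w}"
  proof
    fix u assume u: "u \<in> {u \<in> {0..<2*k+1} - {v}. parity_colour k (v + u) = i}"
    then have "even u"
      using False assms(2) by (auto simp: parity_colour_def split: if_splits)
    then show "u \<in> {u \<in> {0..<2*k+1}. even u} - {w}"
      using u w_colour by auto
  qed
  then have "card {u \<in> {0..<2*k+1} - {v}. parity_colour k (v + u) = i}
      \<le> card ({u \<in> {0..<2*k+1}. even u} - {w})"
    by (intro card_mono) auto
  also have "\<dots> = k"
    using card_even_below_odd[of k] by (simp add: card_Diff_singleton w_def)
  finally show ?thesis .
qed

lemma color_deg_parity_colouring_le:
  assumes "v < 2*k + 1"
  shows "color_deg (complete_edges {0..<2*k+1}) (parity_colouring k) i v \<le> k"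
proof (cases "i = 2")
  case True
  then show ?thesis using color_deg_2_parity_colouring[OF assms] by simp
next
  case False
  then show ?thesis
    using assms card_parity_colour_class_le by (simp add: color_deg_sum_colouring)
qed

lemma nsd_parity_colouring: "nsd (complete_edges {0..<2*k+1}) (parity_colouring k)"
  unfolding nsd_def mem_complete_edges
proof (intro allI impI)
  fix u v assume "u \<in> {0..<2*k+1} \<and> v \<in> {0..<2*k+1} \<and> u \<noteq> v"
  then show "sigma (complete_edges {0..<2*k+1}) (parity_colouring k) u
      \<noteq> sigma (complete_edges {0..<2*k+1}) (parity_colouring k) v"
    using sigma_parity_colouring[of u k] sigma_parity_colouring[of v k] by simp
qed

lemma quasi_majority_parity_colouring:
  "quasi_majority {0..<2*k+1} (complete_edges {0..<2*k+1}) (parity_colouring k)"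
  unfolding quasi_majority_def
proof (intro ballI)
  fix v i assume "v \<in> {0..<2*k+1}"
  then show "2 * color_deg (complete_edges {0..<2*k+1}) (parity_colouring k) i v
      \<le> degree (complete_edges {0..<2*k+1}) v + 1"
    using color_deg_parity_colouring_le[of v k i] degree_complete_edges[of v "{0..<2*k+1}"]
    by simp
qed

theorem mainTheorem18:
  fixes k :: nat
  assumes "k \<ge> 1"
  shows "\<exists>c :: nat set \<Rightarrow> nat.
    is_3_edge_coloring (complete_edges {0..<2*k+1}) c \<and>
    nsd (complete_edges {0..<2*k+1}) c \<and>
    quasi_majority {0..<2*k+1} (complete_edges {0..<2*k+1}) c \<and>
    (\<exists>S \<subseteq> {0..<2*k+1}. card S = k \<and>
       (\<forall>v\<in>S. color_deg (complete_edges {0..<2*k+1}) c 2 v = k - 1) \<and>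
       (\<forall>v\<in>{0..<2*k+1} - S. color_deg (complete_edges {0..<2*k+1}) c 2 v = k))"
proof (intro exI conjI)
  let ?V = "{0..<2*k+1}"
  show "is_3_edge_coloring (complete_edges ?V) (parity_colouring k)"
    unfolding is_3_edge_coloring_def using parity_colour_range by blast
  show "nsd (complete_edges ?V) (parity_colouring k)"
    by (rule nsd_parity_colouring)
  show "quasi_majority ?V (complete_edges ?V) (parity_colouring k)"
    by (rule quasi_majority_parity_colouring)
  show "{u \<in> ?V. odd u} \<subseteq> ?V" by blast
  show "card {u \<in> ?V. odd u} = k" by (rule card_odd_below_odd)
  show "\<forall>v\<in>{u \<in> ?V. odd u}. color_deg (complete_edges ?V) (parity_colouring k) 2 v = k - 1"
       "\<forall>v\<in>?V - {u \<in> ?V. odd u}. color_deg (complete_edges ?V) (parity_colouring k) 2 v = k"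
    using color_deg_2_parity_colouring[of _ k] by auto
qed

end
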